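(* Let $G=(V,E)$ be a finite simple undirected graph with a coloring $\mathcal{C}$ whose vertex color classes are $V_1,\dots,V_r$. Suppose that $(V_{\eta_1},\dots,V_{\eta_r})$, for some $\eta\in\mathfrak{S}_r$, is a color perfect elimination ordering. Write $n_i=|V_{\eta_i}|$, $N_i=\sum_{k\in[i]}n_k$, $N_0=0$, and relabel the vertices so that $V_{\eta_i}=\{N_{i-1}+1,\dots,N_i\}$ for each $i\in[r]$; define $\mathcal{Z}_G^{\mathcal{C}}$ with respect to this vertex numbering, and consider block decompositions with respect to the partition $(n_1,\dots,n_r)$ of $p=|V|$. (i) If $(G,\mathcal{C})$ is CER with respect to the ordering $(V_{\eta_1},\dots,V_{\eta_r})$, then $\mathcal{Z}_G^{\mathcal{C}}$ is a BC-space. (ii) If $(G,\mathcal{C})$ is symmetric CER with respect to the ordering $(V_{\eta_1},\dots,V_{\eta_r})$, then $\mathcal{Z}_G^{\mathcal{C}}$ is a cBC-space.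
   Context: Colored graphs: $G=(V,E)$ is a finite simple undirected graph, $V=[p]$. A coloring $\mathcal{C}$ of $G$ consists of a partition of $V$ into nonempty vertex color classes $V_1,\dots,V_r$ and a partition of $E$ into edge color classes $E_{r+1},\dots,E_{r+R}$. The extended edge set is $\tilde E=E\cup\{\{v\}:v\in V\}$; put $E_i=\{\{v\}:v\in V_i\}$ for $i\in[r]$, so $\{E_1,\dots,E_{r+R}\}$ partitions $\tilde E$. Define $c(v,w)=k$ iff $\{v,w\}\in E_k$ (for $\{v,w\}\in\tilde E$), $c(v):=c(v,v)$ (so $c(v)=i$ iff $v\in V_i$), and $c(v,w)=0$ if $v\ne w$ and $\{v,w\}\notin E$. Orderings: for an ordered partition $(V_{\eta_1},\dots,V_{\eta_r})$, $\eta\in\mathfrak{S}_r$, let $\pi(v)=i$ iff $v\in V_{\eta_i}$ and $V_{\le i}=V_{\eta_1}\cup\dots\cup V_{\eta_i}$. It is a color perfect elimination ordering (cpeo) if for every $i\in[r]$ every $v\in V_{\eta_i}$ is simplicial (its neighbours form a clique) in the induced subgraph $G[V_{\eta_i}\cup\dots\cup V_{\eta_r}]$. For $\{v,w\}\in\tilde E$ and $k,h\in[r+R]$ set $m_{v\to w}(k,h)=|\{u\in V_{\le \min(\pi(v),\pi(w))}: c(v,u)=k,\ c(u,w)=h\}|$ and $m_{v\leftrightarrow w}(k,h)=m_{v\to w}(k,h)+m_{v\to w}(h,k)$. Let $F_i=\{c(v,w):\{v,w\}\in\tilde E,\ c(v)=c(w)=i\}$ and $F=\bigcup_{i}F_i$.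 (M1): for all $\{v,w\},\{v',w'\}\in\tilde E$, $c(v,w)=c(v',w')$ implies $m_{v\leftrightarrow w}=m_{v'\leftrightarrow w'}$ (as functions on $[r+R]^2$). (M2): for all $v,w\in V$ with $c(v)=c(w)$, $m_{v\to w}(k,h)=m_{w\to v}(k,h)$ for all $k,h\in F$. $(G,\mathcal{C})$ is CER with respect to an ordering if the ordering is a cpeo and (M1) holds for it; symmetric CER if in addition (M2) holds for it. Matrix spaces: $\mathcal{Z}_G=\{x\in\mathrm{Sym}(p): x_{ij}=0$ whenever $i\ne j$ and $\{i,j\}\notin E\}$ and $\mathcal{Z}_G^{\mathcal{C}}=\{x\in\mathcal{Z}_G: x_{ij}=x_{kl}$ whenever $\{i,j\},\{k,l\}\in\tilde E$ and $c(i,j)=c(k,l)\}$. BC-spaces: given an ordered partition $(n_1,\dots,n_r)$ of $p$, write $x\in\mathrm{Sym}(p)$ in blocks $X_{kh}\in\mathbb{R}^{n_k\times n_h}$. $\mathrm{BlockTri}(x)$ keeps the blocks $X_{kh}$ with $k\ge h$ and sets the others to zero; $\mathrm{BlockDiag}(x)$ keeps only the blocks $X_{kk}$. For a linear subspace $\mathcal{Z}\subset\mathrm{Sym}(p)$: $M_i(\mathcal{Z})=\{x\in\mathcal{Z}: X_{kh}=0$ unless $(k,h)=(i,i)\}$, $L_i(\mathcal{Z})=\{x\in\mathcal{Z}: X_{kh}=0$ unless $k>h=i$ or $h>k=i\}$. $\mathcal{Z}$ is a BC-space if (Z0) $I_p\in\mathcal{Z}$ and $\mathcal{Z}=(\bigoplus_{i\in[r]}M_i(\mathcal{Z}))\oplus(\bigoplus_{i\in[r-1]}L_i(\mathcal{Z}))$,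 and (Z1) $\mathrm{BlockTri}(x)\mathrm{BlockTri}(x)^\top\in\mathcal{Z}$ for all $x\in\mathcal{Z}$. It is a cBC-space if moreover (Z2) $\mathrm{BlockDiag}(x)\mathrm{BlockDiag}(y)\in\mathcal{Z}$ for all $x,y\in\mathcal{Z}$. *)

theory Defs
  imports Complex_Main "HOL-Library.Function_Algebras"
begin

text \<open>The vertex set is {0..<p} (the paper's [p], shifted by one);
 a p x p real matrix is a function nat => nat => real vanishing outside {0..<p}^2,
 and matrix index a corresponds to vertex a.
 The colouring is a function col on extended edges: col {v} is the vertex colour
 (in {1..r}), col {v,w} the edge colour (in {r+1..r+R}).\<close>

type_synonym rmat = "nat \<Rightarrow> nat \<Rightarrow> real"

definition simple_graph :: "nat \<Rightarrow> nat set set \<Rightarrow> bool" where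
  "simple_graph p E \<longleftrightarrow> (\<forall>e\<in>E. \<exists>v w. v < p \<and> w < p \<and> v \<noteq> w \<and> e = {v, w})"

definition is_coloring :: "nat \<Rightarrow> nat set set \<Rightarrow> nat \<Rightarrow> nat \<Rightarrow> (nat set \<Rightarrow> nat) \<Rightarrow> bool" where
  "is_coloring p E r R col \<longleftrightarrow>
     (\<forall>v<p. col {v} \<in> {1..r}) \<and> (\<forall>i\<in>{1..r}. \<exists>v<p. col {v} = i) \<and>
     (\<forall>e\<in>E. col e \<in> {r+1..r+R}) \<and> (\<forall>k\<in>{r+1..r+R}. \<exists>e\<in>E. col e = k)"

definition ext_edge :: "nat set set \<Rightarrow> nat \<Rightarrow> nat \<Rightarrow> bool" where
  "ext_edge E v w \<longleftrightarrow> v = w \<or> {v, w} \<in> E"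

definition cc :: "nat set set \<Rightarrow> (nat set \<Rightarrow> nat) \<Rightarrow> nat \<Rightarrow> nat \<Rightarrow> nat" where
  "cc E col v w = (if v = w then col {v} else if {v, w} \<in> E then col {v, w} else 0)"

definition pos :: "nat \<Rightarrow> (nat \<Rightarrow> nat) \<Rightarrow> (nat set \<Rightarrow> nat) \<Rightarrow> nat \<Rightarrow> nat" where
  "pos r \<eta> col v = (THE i. i \<in> {1..r} \<and> \<eta> i = col {v})"

definition cpeo :: "nat \<Rightarrow> nat set set \<Rightarrow> nat \<Rightarrow> (nat set \<Rightarrow> nat) \<Rightarrow> (nat \<Rightarrow> nat) \<Rightarrow> bool" where
  "cpeo p E r col \<eta> \<longleftrightarrow>
     (\<forall>i\<in>{1..r}. \<forall>v<p. pos r \<eta> col v = i \<longrightarrow>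
        (\<forall>u<p. \<forall>w<p. i \<le> pos r \<eta> col u \<and> i \<le> pos r \<eta> col w \<and> u \<noteq> w \<and>
            {v, u} \<in> E \<and> {v, w} \<in> E \<longrightarrow> {u, w} \<in> E))"

definition mto :: "nat \<Rightarrow> nat set set \<Rightarrow> nat \<Rightarrow> (nat set \<Rightarrow> nat) \<Rightarrow> (nat \<Rightarrow> nat)
                    \<Rightarrow> nat \<Rightarrow> nat \<Rightarrow> nat \<Rightarrow> nat \<Rightarrow> nat" where
  "mto p E r col \<eta> v w k h =
     card {u. u < p \<and> pos r \<eta> col u \<le> min (pos r \<eta> col v) (pos r \<eta> col w)
              \<and> cc E col v u = k \<and> cc E col u w = h}"

definition mboth :: "nat \<Rightarrow> nat set set \<Rightarrow> nat \<Rightarrow> (nat set \<Rightarrow> nat) \<Rightarrow> (nat \<Rightarrow> nat)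
                    \<Rightarrow> nat \<Rightarrow> nat \<Rightarrow> nat \<Rightarrow> nat \<Rightarrow> nat" where
  "mboth p E r col \<eta> v w k h = mto p E r col \<eta> v w k h + mto p E r col \<eta> v w h k"

definition cond_M1 :: "nat \<Rightarrow> nat set set \<Rightarrow> nat \<Rightarrow> nat \<Rightarrow> (nat set \<Rightarrow> nat) \<Rightarrow> (nat \<Rightarrow> nat) \<Rightarrow> bool" where
  "cond_M1 p E r R col \<eta> \<longleftrightarrow>
     (\<forall>v<p. \<forall>w<p. \<forall>v'<p. \<forall>w'<p.
        ext_edge E v w \<and> ext_edge E v' w' \<and> cc E col v w = cc E col v' w' \<longrightarrow>
        (\<forall>k\<in>{1..r+R}. \<forall>h\<in>{1..r+R}. mboth p E r col \<eta> v w k h = mboth p E r col \<eta> v' w' k h))"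

definition Fset :: "nat \<Rightarrow> nat set set \<Rightarrow> nat \<Rightarrow> (nat set \<Rightarrow> nat) \<Rightarrow> nat set" where
  "Fset p E r col = {cc E col v w | v w. v < p \<and> w < p \<and> ext_edge E v w \<and>
                        (\<exists>i\<in>{1..r}. col {v} = i \<and> col {w} = i)}"

definition cond_M2 :: "nat \<Rightarrow> nat set set \<Rightarrow> nat \<Rightarrow> (nat set \<Rightarrow> nat) \<Rightarrow> (nat \<Rightarrow> nat) \<Rightarrow> bool" where
  "cond_M2 p E r col \<eta> \<longleftrightarrow>
     (\<forall>v<p. \<forall>w<p. col {v} = col {w} \<longrightarrow>
        (\<forall>k\<in>Fset p E r col. \<forall>h\<in>Fset p E r col. mto p E r col \<eta> v w k h = mto p E r col \<eta> w v k h))"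

definition CER :: "nat \<Rightarrow> nat set set \<Rightarrow> nat \<Rightarrow> nat \<Rightarrow> (nat set \<Rightarrow> nat) \<Rightarrow> (nat \<Rightarrow> nat) \<Rightarrow> bool" where
  "CER p E r R col \<eta> \<longleftrightarrow> cpeo p E r col \<eta> \<and> cond_M1 p E r R col \<eta>"

definition symCER :: "nat \<Rightarrow> nat set set \<Rightarrow> nat \<Rightarrow> nat \<Rightarrow> (nat set \<Rightarrow> nat) \<Rightarrow> (nat \<Rightarrow> nat) \<Rightarrow> bool" where
  "symCER p E r R col \<eta> \<longleftrightarrow> CER p E r R col \<eta> \<and> cond_M2 p E r col \<eta>"

definition Sym :: "nat \<Rightarrow> rmat set" where
  "Sym p = {x. (\<forall>i j. x i j = x j i) \<and> (\<forall>i j. (p \<le> i \<or> p \<le> j) \<longrightarrow> x i j = 0)}"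

definition idm :: "nat \<Rightarrow> rmat" where
  "idm p = (\<lambda>i j. if i = j \<and> i < p then 1 else 0)"

definition mmul :: "nat \<Rightarrow> rmat \<Rightarrow> rmat \<Rightarrow> rmat" where
  "mmul p x y = (\<lambda>i j. \<Sum>k<p. x i k * y k j)"

definition mtrans :: "rmat \<Rightarrow> rmat" where
  "mtrans x = (\<lambda>i j. x j i)"

definition linear_subspace :: "nat \<Rightarrow> rmat set \<Rightarrow> bool" where
  "linear_subspace p Z \<longleftrightarrow> Z \<subseteq> Sym p \<and> 0 \<in> Z \<and> (\<forall>x\<in>Z. \<forall>y\<in>Z. x + y \<in> Z) \<and>
     (\<forall>c::real. \<forall>x\<in>Z. (\<lambda>i j. c * x i j) \<in> Z)"

definition Z_G_C :: "nat \<Rightarrow> nat set set \<Rightarrow> (nat set \<Rightarrow> nat) \<Rightarrow> rmat set" where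
  "Z_G_C p E col = {x \<in> Sym p.
      (\<forall>i<p. \<forall>j<p. i \<noteq> j \<and> {i, j} \<notin> E \<longrightarrow> x i j = 0) \<and>
      (\<forall>i<p. \<forall>j<p. \<forall>k<p. \<forall>l<p. ext_edge E i j \<and> ext_edge E k l \<and> cc E col i j = cc E col k l
          \<longrightarrow> x i j = x k l)}"

definition cumN :: "(nat \<Rightarrow> nat) \<Rightarrow> nat \<Rightarrow> nat" where
  "cumN ns i = (\<Sum>k\<in>{1..i}. ns k)"

definition blk :: "(nat \<Rightarrow> nat) \<Rightarrow> nat \<Rightarrow> nat" where
  "blk ns a = (LEAST i. a < cumN ns i)"

definition ordered_partition :: "nat \<Rightarrow> nat \<Rightarrow> (nat \<Rightarrow> nat) \<Rightarrow> bool" where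
  "ordered_partition p r ns \<longleftrightarrow> (\<forall>i\<in>{1..r}. 0 < ns i) \<and> cumN ns r = p"

definition BlockTri :: "(nat \<Rightarrow> nat) \<Rightarrow> rmat \<Rightarrow> rmat" where
  "BlockTri ns x = (\<lambda>a b. if blk ns b \<le> blk ns a then x a b else 0)"

definition BlockDiag :: "(nat \<Rightarrow> nat) \<Rightarrow> rmat \<Rightarrow> rmat" where
  "BlockDiag ns x = (\<lambda>a b. if blk ns a = blk ns b then x a b else 0)"

definition Mblk :: "nat \<Rightarrow> (nat \<Rightarrow> nat) \<Rightarrow> rmat set \<Rightarrow> nat \<Rightarrow> rmat set" where
  "Mblk p ns Z i = {x \<in> Z. \<forall>a<p. \<forall>b<p. \<not> (blk ns a = i \<and> blk ns b = i) \<longrightarrow> x a b = 0}"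

definition Lblk :: "nat \<Rightarrow> (nat \<Rightarrow> nat) \<Rightarrow> rmat set \<Rightarrow> nat \<Rightarrow> rmat set" where
  "Lblk p ns Z i = {x \<in> Z. \<forall>a<p. \<forall>b<p.
      \<not> ((blk ns a > blk ns b \<and> blk ns b = i) \<or> (blk ns b > blk ns a \<and> blk ns a = i)) \<longrightarrow> x a b = 0}"

definition block_direct_sum :: "nat \<Rightarrow> nat \<Rightarrow> (nat \<Rightarrow> nat) \<Rightarrow> rmat set \<Rightarrow> bool" where
  "block_direct_sum p r ns Z \<longleftrightarrow>
     Z = {(\<Sum>i\<in>{1..r}. m i) + (\<Sum>i\<in>{1..r-1}. l i) | m l.
            (\<forall>i\<in>{1..r}. m i \<in> Mblk p ns Z i) \<and> (\<forall>i\<in>{1..r-1}. l i \<in> Lblk p ns Z i)} \<and>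
     (\<forall>m l. (\<forall>i\<in>{1..r}. m i \<in> Mblk p ns Z i) \<and> (\<forall>i\<in>{1..r-1}. l i \<in> Lblk p ns Z i) \<and>
            (\<Sum>i\<in>{1..r}. m i) + (\<Sum>i\<in>{1..r-1}. l i) = 0
        \<longrightarrow> (\<forall>i\<in>{1..r}. m i = 0) \<and> (\<forall>i\<in>{1..r-1}. l i = 0))"

definition BC_space :: "nat \<Rightarrow> nat \<Rightarrow> (nat \<Rightarrow> nat) \<Rightarrow> rmat set \<Rightarrow> bool" where
  "BC_space p r ns Z \<longleftrightarrow> linear_subspace p Z \<and>
     idm p \<in> Z \<and> block_direct_sum p r ns Z \<and>
     (\<forall>x\<in>Z. mmul p (BlockTri ns x) (mtrans (BlockTri ns x)) \<in> Z)"

definition cBC_space :: "nat \<Rightarrow> nat \<Rightarrow> (nat \<Rightarrow> nat) \<Rightarrow> rmat set \<Rightarrow> bool" where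
  "cBC_space p r ns Z \<longleftrightarrow> BC_space p r ns Z \<and>
     (\<forall>x\<in>Z. \<forall>y\<in>Z. mmul p (BlockDiag ns x) (BlockDiag ns y) \<in> Z)"

end

theory Submission
  imports Defs
begin

text \<open>
  A matrix x in Z is a function \<theta> of the colour: x_{ab} = \<theta>_{c(a,b)}. The count
  m_{a\<leftrightarrow>b}(\<eta>_i, c(a,b)) is nonzero exactly for i = min(\<pi> a, \<pi> b), where it equals
  2 or 1 according as \<pi> a = \<pi> b or not;
  so under (M1) the colour of an extended edge determines its block position, and cutting x
  into blocks stays inside Z. An entry of BlockTri(x) BlockTri(x)^T is the sum of
  x_{au} x_{ub} over \<pi> u \<le> min(\<pi> a, \<pi> b), i.e. the sum of \<theta>_k \<theta>_h m_{a\<rightarrow>b}(k,h) over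
  colours k, h; since \<theta>_k \<theta>_h is symmetric this is half the sum against m_{a\<leftrightarrow>b}, which by
  (M1) depends only on c(a,b), and the cpeo makes it vanish on non-edges. For the product of
  block diagonals only colours in F occur, and there (M2) makes m_{a\<rightarrow>b} itself symmetric.
\<close>

lemma sum_fun_apply: "(\<Sum>i\<in>I. f i) x = (\<Sum>i\<in>I. f i x)"
  by (induction I rule: infinite_finite_induct) auto

lemma sum_by_value_pairs:
  fixes f :: "'k \<Rightarrow> 'k \<Rightarrow> 'a::semiring_1"
  assumes "finite U" "finite K" "\<And>u. u \<in> U \<Longrightarrow> g u \<in> K \<and> h u \<in> K"
  shows "(\<Sum>u\<in>U. f (g u) (h u))
       = (\<Sum>k\<in>K. \<Sum>l\<in>K. of_nat (card {u\<in>U. g u = k \<and> h u = l}) * f k l)"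
proof -
  have "(\<Sum>u\<in>U. f (g u) (h u)) = (\<Sum>q\<in>K \<times> K. \<Sum>u\<in>{u. u \<in> U \<and> (g u, h u) = q}. f (g u) (h u))"
    by (rule sum.group[symmetric]) (use assms in auto)
  also have "\<dots> = (\<Sum>(k, l)\<in>K \<times> K. of_nat (card {u\<in>U. g u = k \<and> h u = l}) * f k l)"
    by (intro sum.cong) auto
  finally show ?thesis
    by (simp add: sum.cartesian_product)
qed

definition min_mult :: "nat \<Rightarrow> nat \<Rightarrow> nat \<Rightarrow> nat" where
  "min_mult i j l = of_bool (i \<le> j \<and> i = l) + of_bool (j \<le> i \<and> j = l)"

lemma min_mult_eq: "min_mult i j l = (if l = min i j then if i = j then 2 else 1 else 0)"
  unfolding min_mult_def min_def by auto

lemma min_mult_at_min_eqD: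
  assumes "min_mult i j (min i j) = min_mult i' j' (min i j)"
  shows "min i j = min i' j' \<and> (i = j \<longleftrightarrow> i' = j')"
  using assms unfolding min_mult_eq by (auto split: if_splits)

locale ordered_colouring =
  fixes p r R :: nat and E :: "nat set set" and col :: "nat set \<Rightarrow> nat"
    and \<eta> :: "nat \<Rightarrow> nat" and ns :: "nat \<Rightarrow> nat"
  assumes graph: "simple_graph p E"
    and coloring: "is_coloring p E r R col"
    and eta: "bij_betw \<eta> {1..r} {1..r}"
    and numbering: "\<forall>i\<in>{1..r}. {v. v < p \<and> col {v} = \<eta> i} = {cumN ns (i - 1) ..< cumN ns i}"
begin

abbreviation "\<pi> v \<equiv> pos r \<eta> col v"
abbreviation "c v w \<equiv> cc E col v w"
abbreviation "m_to \<equiv> mto p E r col \<eta>"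
abbreviation "m_both \<equiv> mboth p E r col \<eta>"
abbreviation "F \<equiv> Fset p E r col"
abbreviation "Z \<equiv> Z_G_C p E col"

lemma vertex_colour: "v < p \<Longrightarrow> col {v} \<in> {1..r}"
  using coloring unfolding is_coloring_def by simp

lemma edgeD: "{v, w} \<in> E \<Longrightarrow> v \<noteq> w \<and> v < p \<and> w < p \<and> col {v, w} \<in> {r+1..r+R}"
  using graph coloring unfolding simple_graph_def is_coloring_def
  by (fastforce simp: doubleton_eq_iff)

lemma cc_commute: "c v w = c w v"
  unfolding cc_def by (auto simp: insert_commute)

lemma cc_diag: "c v v = col {v}"
  unfolding cc_def by simp

lemma cc_le: "v < p \<Longrightarrow> c v w \<le> r + R"
  unfolding cc_def using edgeD[of v w] vertex_colour[of v] by auto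

lemma cc_eq_0_iff: "v < p \<Longrightarrow> c v w = 0 \<longleftrightarrow> \<not> ext_edge E v w"
  unfolding cc_def ext_edge_def using edgeD[of v w] vertex_colour[of v] by auto

lemma cc_vertex_colour_iff: "v < p \<Longrightarrow> c v w \<in> {1..r} \<longleftrightarrow> v = w"
  unfolding cc_def using edgeD[of v w] vertex_colour[of v] by auto

lemma eta_range: "i \<in> {1..r} \<Longrightarrow> \<eta> i \<in> {1..r}"
  using bij_betw_apply[OF eta] .

lemma pos_eqI: "i \<in> {1..r} \<Longrightarrow> col {v} = \<eta> i \<Longrightarrow> \<pi> v = i"
  unfolding pos_def
  by (rule the_equality) (use bij_betw_imp_inj_on[OF eta] in \<open>auto dest: inj_onD\<close>)

lemma pos_range: "v < p \<Longrightarrow> \<pi> v \<in> {1..r} \<and> \<eta> (\<pi> v) = col {v}"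
proof -
  assume "v < p"
  then have "col {v} \<in> \<eta> ` {1..r}"
    using vertex_colour bij_betw_imp_surj_on[OF eta] by simp
  then obtain i where "i \<in> {1..r}" "col {v} = \<eta> i" by blast
  then show ?thesis using pos_eqI by simp
qed

lemma pos_eq_iff:
  assumes "v < p" "i \<in> {1..r}"
  shows "\<pi> v = i \<longleftrightarrow> col {v} = \<eta> i"
proof
  assume "\<pi> v = i"
  then show "col {v} = \<eta> i" using pos_range[OF assms(1)] by metis
qed (rule pos_eqI[OF assms(2)])

lemma pos_eq_pos_iff: "v < p \<Longrightarrow> w < p \<Longrightarrow> \<pi> v = \<pi> w \<longleftrightarrow> col {v} = col {w}"
  using pos_range[of v] pos_eq_iff[of w "\<pi> v"] by metis

lemma blk_eq_pos: "v < p \<Longrightarrow> blk ns v = \<pi> v"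
proof -
  assume v: "v < p"
  let ?i = "\<pi> v"
  have "v \<in> {v. v < p \<and> col {v} = \<eta> ?i}" using pos_range[OF v] v by simp
  then have "v \<in> {cumN ns (?i - 1) ..< cumN ns ?i}" using numbering pos_range[OF v] by blast
  then have lo: "cumN ns (?i - 1) \<le> v" and hi: "v < cumN ns ?i" by auto
  have "cumN ns j \<le> v" if "j < ?i" for j
  proof -
    have "cumN ns j \<le> cumN ns (?i - 1)"
      unfolding cumN_def using that by (intro sum_mono2) auto
    then show ?thesis using lo by simp
  qed
  then show ?thesis
    unfolding blk_def by (intro Least_equality hi) (meson not_le)
qed

lemma mto_swap: "m_to b a k h = m_to a b h k"
  unfolding mto_def by (rule arg_cong[where f = card]) (auto simp: cc_commute min.commute)

lemma mto_vertex_colour: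
  assumes k: "k \<in> {1..r}" and v: "v < p"
  shows "m_to v w k h = of_bool (\<pi> v \<le> \<pi> w \<and> col {v} = k \<and> c v w = h)"
proof -
  have "c v u = k \<longleftrightarrow> u = v \<and> col {v} = k" for u
    using cc_vertex_colour_iff[OF v, of u] k by (auto simp: cc_diag)
  then have "{u. u < p \<and> \<pi> u \<le> min (\<pi> v) (\<pi> w) \<and> c v u = k \<and> c u w = h}
      = (if \<pi> v \<le> \<pi> w \<and> col {v} = k \<and> c v w = h then {v} else {})"
    using v by auto
  then show ?thesis unfolding mto_def by simp
qed

lemma mboth_vertex_colour:
  assumes i: "i \<in> {1..r}" and v: "v < p" and w: "w < p"
  shows "m_both v w (\<eta> i) (c v w) = min_mult (\<pi> v) (\<pi> w) i"
  unfolding mboth_def mto_swap[of v w "c v w"] min_mult_def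
  using eta_range[OF i] mto_vertex_colour[of "\<eta> i"] pos_eq_iff[OF v i] pos_eq_iff[OF w i] v w
  by (simp add: cc_commute)

lemma mto_sum_by_colours:
  fixes f :: "nat \<Rightarrow> nat \<Rightarrow> 'a::semiring_1"
  assumes "a < p"
  shows "(\<Sum>u | u < p \<and> \<pi> u \<le> min (\<pi> a) (\<pi> b). f (c a u) (c u b))
       = (\<Sum>k\<le>r+R. \<Sum>h\<le>r+R. of_nat (m_to a b k h) * f k h)"
proof -
  have "(\<Sum>u | u < p \<and> \<pi> u \<le> min (\<pi> a) (\<pi> b). f (c a u) (c u b))
      = (\<Sum>k\<le>r+R. \<Sum>h\<le>r+R. of_nat (card {u \<in> {u. u < p \<and> \<pi> u \<le> min (\<pi> a) (\<pi> b)}.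
            c a u = k \<and> c u b = h}) * f k h)"
    by (rule sum_by_value_pairs) (use assms cc_le cc_commute in auto)
  then show ?thesis unfolding mto_def by (simp add: conj_assoc)
qed

lemma Z_symmetric: "x \<in> Z \<Longrightarrow> x a b = x b a"
  unfolding Z_G_C_def Sym_def by blast

lemma Z_outside: "x \<in> Z \<Longrightarrow> p \<le> a \<or> p \<le> b \<Longrightarrow> x a b = 0"
  unfolding Z_G_C_def Sym_def by blast

lemma Z_non_edge: "x \<in> Z \<Longrightarrow> a < p \<Longrightarrow> b < p \<Longrightarrow> a \<noteq> b \<Longrightarrow> {a, b} \<notin> E \<Longrightarrow> x a b = 0"
  unfolding Z_G_C_def by blast

lemma Z_support:
  assumes "x \<in> Z" "x a b \<noteq> 0"
  shows "a < p \<and> b < p \<and> ext_edge E a b"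
proof -
  have "a < p" "b < p" using Z_outside assms by (meson not_le)+
  then show ?thesis using Z_non_edge assms unfolding ext_edge_def by blast
qed

lemma Z_colour_const:
  "x \<in> Z \<Longrightarrow> a < p \<Longrightarrow> b < p \<Longrightarrow> a' < p \<Longrightarrow> b' < p \<Longrightarrow>
    ext_edge E a b \<Longrightarrow> ext_edge E a' b' \<Longrightarrow> c a b = c a' b' \<Longrightarrow> x a b = x a' b'"
  unfolding Z_G_C_def by blast

lemma Z_memI:
  assumes "\<And>a b. x a b = x b a"
    and "\<And>a b. p \<le> a \<or> p \<le> b \<Longrightarrow> x a b = 0"
    and "\<And>a b. a < p \<Longrightarrow> b < p \<Longrightarrow> a \<noteq> b \<Longrightarrow> {a, b} \<notin> E \<Longrightarrow> x a b = 0"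
    and "\<And>a b a' b'. a < p \<Longrightarrow> b < p \<Longrightarrow> a' < p \<Longrightarrow> b' < p \<Longrightarrow>
          ext_edge E a b \<Longrightarrow> ext_edge E a' b' \<Longrightarrow> c a b = c a' b' \<Longrightarrow> x a b = x a' b'"
  shows "x \<in> Z"
  unfolding Z_G_C_def Sym_def mem_Collect_eq
  by (intro conjI allI impI assms) auto

lemma Z_linear_subspace: "linear_subspace p Z"
  unfolding linear_subspace_def
proof (intro conjI ballI allI)
  show "Z \<subseteq> Sym p" unfolding Z_G_C_def by blast
  show "0 \<in> Z" by (rule Z_memI) auto
next
  fix x y assume x: "x \<in> Z" and y: "y \<in> Z"
  show "x + y \<in> Z"
  proof (rule Z_memI)
    show "(x + y) a b = (x + y) b a" for a b
      using Z_symmetric[OF x, of a b] Z_symmetric[OF y, of a b] by simp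
    show "(x + y) a b = (x + y) a' b'"
      if "a < p" "b < p" "a' < p" "b' < p" "ext_edge E a b" "ext_edge E a' b'" "c a b = c a' b'"
      for a b a' b'
      using Z_colour_const[OF x that] Z_colour_const[OF y that] by simp
  qed (simp_all add: Z_outside[OF x] Z_outside[OF y] Z_non_edge[OF x] Z_non_edge[OF y])
next
  fix t :: real and x assume x: "x \<in> Z"
  show "(\<lambda>a b. t * x a b) \<in> Z"
  proof (rule Z_memI)
    show "t * x a b = t * x b a" for a b using Z_symmetric[OF x, of a b] by simp
    show "t * x a b = t * x a' b'"
      if "a < p" "b < p" "a' < p" "b' < p" "ext_edge E a b" "ext_edge E a' b'" "c a b = c a' b'"
      for a b a' b'
      using Z_colour_const[OF x that] by simp
  qed (simp_all add: Z_outside[OF x] Z_non_edge[OF x])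
qed

lemma Z_add: "x \<in> Z \<Longrightarrow> y \<in> Z \<Longrightarrow> x + y \<in> Z"
  using Z_linear_subspace unfolding linear_subspace_def by blast

lemma Z_sum_closed:
  assumes "finite I" "\<And>i. i \<in> I \<Longrightarrow> f i \<in> Z"
  shows "(\<Sum>i\<in>I. f i) \<in> Z"
  using assms Z_linear_subspace Z_add unfolding linear_subspace_def
  by (induction I rule: finite_induct) auto

lemma idm_in_Z: "idm p \<in> Z"
proof (rule Z_memI)
  fix a b a' b' assume "a < p" "a' < p" "c a b = c a' b'"
  then have "a = b \<longleftrightarrow> a' = b'"
    using cc_vertex_colour_iff[of a b] cc_vertex_colour_iff[of a' b'] by simp
  then show "idm p a b = idm p a' b'" using \<open>a < p\<close> \<open>a' < p\<close> unfolding idm_def by simp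
qed (auto simp: idm_def)

text \<open>The value \<theta>_k of x on colour k; 0 for k = 0 and for colours that do not occur.\<close>

definition colour_value :: "rmat \<Rightarrow> nat \<Rightarrow> real" where
  "colour_value x k =
     (if k \<noteq> 0 \<and> (\<exists>a b. a < p \<and> b < p \<and> c a b = k)
      then case SOME (a, b). a < p \<and> b < p \<and> c a b = k of (a, b) \<Rightarrow> x a b else 0)"

lemma colour_value_0 [simp]: "colour_value x 0 = 0"
  unfolding colour_value_def by simp

lemma colour_value_neq_0E:
  assumes "colour_value x k \<noteq> 0"
  obtains a b where "a < p" "b < p" "c a b = k" "x a b \<noteq> 0"
proof -
  have ex: "\<exists>q. case q of (a, b) \<Rightarrow> a < p \<and> b < p \<and> c a b = k"
    using assms unfolding colour_value_def by (auto split: if_splits)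
  obtain a b where q: "(SOME (a, b). a < p \<and> b < p \<and> c a b = k) = (a, b)"
    by fastforce
  from someI_ex[OF ex] q assms show ?thesis
    using that unfolding colour_value_def by (auto split: if_splits)
qed

lemma colour_value_eq:
  assumes x: "x \<in> Z" and ab: "a < p" "b < p"
  shows "x a b = colour_value x (c a b)"
proof (cases "c a b = 0")
  case True
  then show ?thesis using Z_support[OF x] ab cc_eq_0_iff by fastforce
next
  case False
  obtain a' b' where q: "(SOME (a', b'). a' < p \<and> b' < p \<and> c a' b' = c a b) = (a', b')"
    by fastforce
  have "case (a, b) of (a', b') \<Rightarrow> a' < p \<and> b' < p \<and> c a' b' = c a b" using ab by simp
  from someI[of "\<lambda>(a', b'). a' < p \<and> b' < p \<and> c a' b' = c a b", OF this]
  have a'b': "a' < p" "b' < p" "c a' b' = c a b" by (simp_all add: q)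
  have "x a b = x a' b'"
    using Z_colour_const[OF x ab a'b'(1,2)] a'b' False ab cc_eq_0_iff by metis
  then show ?thesis using False ab a'b' q unfolding colour_value_def by auto
qed

subsection \<open>Block decomposition\<close>

definition block_part :: "(bool \<Rightarrow> nat \<Rightarrow> bool) \<Rightarrow> rmat \<Rightarrow> rmat" where
  "block_part Q x =
     (\<lambda>a b. if Q (blk ns a = blk ns b) (min (blk ns a) (blk ns b)) then x a b else 0)"

lemma sum_block_parts:
  assumes x: "x \<in> Z"
  shows "x = (\<Sum>i\<in>{1..r}. block_part (\<lambda>same j. same \<and> j = i) x)
           + (\<Sum>i\<in>{1..r-1}. block_part (\<lambda>same j. \<not> same \<and> j = i) x)"
proof (intro ext)
  fix a b
  show "x a b = ((\<Sum>i\<in>{1..r}. block_part (\<lambda>same j. same \<and> j = i) x)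
              + (\<Sum>i\<in>{1..r-1}. block_part (\<lambda>same j. \<not> same \<and> j = i) x)) a b"
  proof (cases "a < p \<and> b < p")
    case True
    then have blk: "blk ns a \<in> {1..r}" "blk ns b \<in> {1..r}" using blk_eq_pos pos_range by auto
    show ?thesis
    proof (cases "blk ns a = blk ns b")
      case True
      then show ?thesis using blk by (simp add: sum_fun_apply block_part_def)
    next
      case False
      then have "min (blk ns a) (blk ns b) \<in> {1..r-1}" using blk by (auto simp: min_def)
      then show ?thesis using False by (simp add: sum_fun_apply block_part_def)
    qed
  next
    case False
    then have "x a b = 0" using Z_outside[OF x] by auto
    then show ?thesis by (simp add: sum_fun_apply block_part_def cong: if_cong)
  qed
qed

lemma Mblk_support:
  assumes "m \<in> Mblk p ns Z i" "m a b \<noteq> 0"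
  shows "blk ns a = i \<and> blk ns b = i"
proof -
  have "a < p" "b < p" using assms Z_support unfolding Mblk_def by blast+
  then show ?thesis using assms unfolding Mblk_def by blast
qed

lemma Lblk_support:
  assumes "l \<in> Lblk p ns Z i" "l a b \<noteq> 0"
  shows "blk ns a \<noteq> blk ns b \<and> min (blk ns a) (blk ns b) = i"
proof -
  have "a < p" "b < p" using assms Z_support unfolding Lblk_def by blast+
  then have "(blk ns a > blk ns b \<and> blk ns b = i) \<or> (blk ns b > blk ns a \<and> blk ns a = i)"
    using assms unfolding Lblk_def by blast
  then show ?thesis by (auto simp: min_def)
qed

lemma block_components_unique:
  assumes m: "\<forall>i\<in>{1..r}. m i \<in> Mblk p ns Z i" and l: "\<forall>i\<in>{1..r-1}. l i \<in> Lblk p ns Z i"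
    and sum_0: "(\<Sum>i\<in>{1..r}. m i) + (\<Sum>i\<in>{1..r-1}. l i) = 0"
  shows "(\<forall>i\<in>{1..r}. m i = 0) \<and> (\<forall>i\<in>{1..r-1}. l i = 0)"
proof -
  have entry_0: "(\<Sum>j\<in>{1..r}. m j a b) + (\<Sum>j\<in>{1..r-1}. l j a b) = 0" for a b
    using fun_cong[OF fun_cong[OF sum_0, of a], of b] by (simp add: sum_fun_apply)
  have "m i a b = 0" if i: "i \<in> {1..r}" for i a b
  proof (rule ccontr)
    assume nz: "m i a b \<noteq> 0"
    then have blk: "blk ns a = i" "blk ns b = i" using Mblk_support m i by blast+
    have "m j a b = 0" if "j \<in> {1..r}" "j \<noteq> i" for j
      using Mblk_support[of "m j" j a b] m that blk by fastforce
    then have "(\<Sum>j\<in>{1..r}. m j a b) = m i a b"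
      using i by (simp add: sum.remove[of _ i] sum.neutral)
    moreover have "l j a b = 0" if "j \<in> {1..r-1}" for j
      using Lblk_support[of "l j" j a b] l that blk by fastforce
    ultimately show False using entry_0[of a b] nz by simp
  qed
  moreover have "l i a b = 0" if i: "i \<in> {1..r-1}" for i a b
  proof (rule ccontr)
    assume nz: "l i a b \<noteq> 0"
    then have blk: "blk ns a \<noteq> blk ns b" "min (blk ns a) (blk ns b) = i"
      using Lblk_support l i by blast+
    have "l j a b = 0" if "j \<in> {1..r-1}" "j \<noteq> i" for j
      using Lblk_support[of "l j" j a b] l that blk by fastforce
    then have "(\<Sum>j\<in>{1..r-1}. l j a b) = l i a b"
      using i by (simp add: sum.remove[of _ i] sum.neutral)
    moreover have "m j a b = 0" if "j \<in> {1..r}" for j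
      using Mblk_support[of "m j" j a b] m that blk by fastforce
    ultimately show False using entry_0[of a b] nz by simp
  qed
  ultimately show ?thesis by (auto simp: fun_eq_iff)
qed

subsection \<open>Products as sums over colours\<close>

definition lower_product :: "rmat \<Rightarrow> rmat \<Rightarrow> rmat" where
  "lower_product x y = (\<lambda>a b. \<Sum>u | u < p \<and> \<pi> u \<le> min (\<pi> a) (\<pi> b). x a u * y u b)"

definition colour_sum :: "(nat \<Rightarrow> nat \<Rightarrow> real) \<Rightarrow> nat \<Rightarrow> nat \<Rightarrow> real" where
  "colour_sum \<phi> a b = (\<Sum>k\<le>r+R. \<Sum>h\<le>r+R. of_nat (m_to a b k h) * \<phi> k h)"

lemma lower_product_outside:
  assumes "x \<in> Z" "y \<in> Z" "p \<le> a \<or> p \<le> b"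
  shows "lower_product x y a b = 0"
  unfolding lower_product_def using assms Z_outside by (intro sum.neutral) auto

lemma lower_product_eq_colour_sum:
  assumes x: "x \<in> Z" and y: "y \<in> Z" and ab: "a < p" "b < p"
  shows "lower_product x y a b = colour_sum (\<lambda>k h. colour_value x k * colour_value y h) a b"
proof -
  have "lower_product x y a b
      = (\<Sum>u | u < p \<and> \<pi> u \<le> min (\<pi> a) (\<pi> b). colour_value x (c a u) * colour_value y (c u b))"
    unfolding lower_product_def using colour_value_eq[OF x ab(1)] colour_value_eq[OF y _ ab(2)]
    by (intro sum.cong) auto
  then show ?thesis
    using mto_sum_by_colours[OF ab(1), of "\<lambda>k h. colour_value x k * colour_value y h"]
    by (simp add: colour_sum_def)
qed

lemma colour_sum_swap: "colour_sum \<phi> b a = colour_sum (\<lambda>k h. \<phi> h k) a b"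
  unfolding colour_sum_def mto_swap[of b a] by (rule sum.swap)

lemma colour_sum_add_swap:
  "colour_sum \<phi> a b + colour_sum (\<lambda>k h. \<phi> h k) a b
     = (\<Sum>k\<le>r+R. \<Sum>h\<le>r+R. of_nat (m_both a b k h) * \<phi> k h)"
proof -
  have "colour_sum (\<lambda>k h. \<phi> h k) a b = (\<Sum>k\<le>r+R. \<Sum>h\<le>r+R. of_nat (m_to a b h k) * \<phi> k h)"
    unfolding colour_sum_def by (rule sum.swap)
  then show ?thesis
    unfolding colour_sum_def mboth_def by (simp add: sum.distrib[symmetric] algebra_simps)
qed

lemma colour_sum_swap_eq:
  assumes "\<And>k h. \<phi> k h \<noteq> 0 \<Longrightarrow> m_to a b h k = m_to a b k h"
  shows "colour_sum (\<lambda>k h. \<phi> h k) a b = colour_sum \<phi> a b"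
proof -
  have "colour_sum (\<lambda>k h. \<phi> h k) a b = (\<Sum>k\<le>r+R. \<Sum>h\<le>r+R. of_nat (m_to a b h k) * \<phi> k h)"
    unfolding colour_sum_def by (rule sum.swap)
  also have "\<dots> = colour_sum \<phi> a b"
    unfolding colour_sum_def using assms by (intro sum.cong refl) (metis mult_zero_right)
  finally show ?thesis .
qed

lemma BlockTri_product_eq:
  assumes x: "x \<in> Z"
  shows "mmul p (BlockTri ns x) (mtrans (BlockTri ns x)) = lower_product x x"
proof (intro ext)
  fix a b
  show "mmul p (BlockTri ns x) (mtrans (BlockTri ns x)) a b = lower_product x x a b"
  proof (cases "a < p \<and> b < p")
    case True
    then have "mmul p (BlockTri ns x) (mtrans (BlockTri ns x)) a b
        = (\<Sum>u<p. if \<pi> u \<le> min (\<pi> a) (\<pi> b) then x a u * x u b else 0)"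
      unfolding mmul_def mtrans_def BlockTri_def
      by (intro sum.cong) (auto simp: blk_eq_pos Z_symmetric[OF x, of b])
    then show ?thesis
      unfolding lower_product_def by (simp add: sum.If_cases Collect_conj_eq Int_commute lessThan_def)
  next
    case False
    then have "BlockTri ns x a u * BlockTri ns x b u = 0" for u
      using Z_outside[OF x] unfolding BlockTri_def by auto
    then have "mmul p (BlockTri ns x) (mtrans (BlockTri ns x)) a b = 0"
      unfolding mmul_def mtrans_def by (intro sum.neutral ballI)
    then show ?thesis using lower_product_outside[OF x x] False by auto
  qed
qed

lemma BlockDiag_product_eq:
  assumes x: "x \<in> Z" and y: "y \<in> Z"
  shows "mmul p (BlockDiag ns x) (BlockDiag ns y) = lower_product (BlockDiag ns x) (BlockDiag ns y)"
proof (intro ext)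
  fix a b
  have "BlockDiag ns x a u * BlockDiag ns y u b = 0"
    if u: "u < p" "\<not> \<pi> u \<le> min (\<pi> a) (\<pi> b)" for u
  proof (rule ccontr)
    assume "BlockDiag ns x a u * BlockDiag ns y u b \<noteq> 0"
    then have "x a u \<noteq> 0" "y u b \<noteq> 0" "blk ns a = blk ns u" "blk ns u = blk ns b"
      unfolding BlockDiag_def by (auto split: if_splits)
    moreover have "a < p" "b < p" using calculation Z_support[OF x] Z_support[OF y] by blast+
    ultimately show False using u by (simp add: blk_eq_pos)
  qed
  then show "mmul p (BlockDiag ns x) (BlockDiag ns y) a b
      = lower_product (BlockDiag ns x) (BlockDiag ns y) a b"
    unfolding mmul_def lower_product_def by (intro sum.mono_neutral_right) auto
qed

end

locale CER_colouring = ordered_colouring +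
  assumes cpeo: "cpeo p E r col \<eta>"
    and M1: "cond_M1 p E r R col \<eta>"
begin

lemma M1_mboth_eq:
  assumes "a < p" "b < p" "a' < p" "b' < p" "ext_edge E a b" "ext_edge E a' b'" "c a b = c a' b'"
    and "k \<in> {1..r+R}" "h \<in> {1..r+R}"
  shows "m_both a b k h = m_both a' b' k h"
  using M1[unfolded cond_M1_def, rule_format, OF assms(1-4)] assms(5-) by blast

lemma colour_determines_block_position:
  assumes ab: "a < p" "b < p" "ext_edge E a b" and a'b': "a' < p" "b' < p" "ext_edge E a' b'"
    and same_colour: "c a b = c a' b'"
  shows "min (\<pi> a) (\<pi> b) = min (\<pi> a') (\<pi> b') \<and> (\<pi> a = \<pi> b \<longleftrightarrow> \<pi> a' = \<pi> b')"
proof -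
  let ?i = "min (\<pi> a) (\<pi> b)"
  have i: "?i \<in> {1..r}" using pos_range ab by (simp add: min_def)
  then have "\<eta> ?i \<in> {1..r+R}" using eta_range by fastforce
  moreover have "c a b \<in> {1..r+R}" using ab cc_le cc_eq_0_iff by fastforce
  ultimately have "m_both a b (\<eta> ?i) (c a b) = m_both a' b' (\<eta> ?i) (c a' b')"
    using M1_mboth_eq[OF ab(1,2) a'b'(1,2) ab(3) a'b'(3) same_colour] same_colour by simp
  then have "min_mult (\<pi> a) (\<pi> b) ?i = min_mult (\<pi> a') (\<pi> b') ?i"
    using mboth_vertex_colour[OF i] ab a'b' by simp
  then show ?thesis by (rule min_mult_at_min_eqD)
qed

lemma block_part_in_Z:
  assumes x: "x \<in> Z"
  shows "block_part Q x \<in> Z"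
proof (rule Z_memI)
  show "block_part Q x a b = block_part Q x b a" for a b
    unfolding block_part_def using Z_symmetric[OF x, of a b] by (simp add: min.commute eq_commute)
next
  fix a b a' b'
  assume ab: "a < p" "b < p" "a' < p" "b' < p" "ext_edge E a b" "ext_edge E a' b'" "c a b = c a' b'"
  then show "block_part Q x a b = block_part Q x a' b'"
    using colour_determines_block_position[of a b a' b'] Z_colour_const[OF x ab]
    unfolding block_part_def by (simp add: blk_eq_pos)
qed (simp_all add: block_part_def Z_outside[OF x] Z_non_edge[OF x])

lemma Z_block_direct_sum: "block_direct_sum p r ns Z"
  unfolding block_direct_sum_def
proof (intro conjI allI impI set_eqI iffI)
  fix x assume x: "x \<in> Z"
  have "block_part (\<lambda>same j. same \<and> j = i) x \<in> Mblk p ns Z i" for i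
    using block_part_in_Z[OF x] unfolding Mblk_def block_part_def by auto
  moreover have "block_part (\<lambda>same j. \<not> same \<and> j = i) x \<in> Lblk p ns Z i" for i
    using block_part_in_Z[OF x] unfolding Lblk_def block_part_def by (auto simp: min_def)
  ultimately show "x \<in> {(\<Sum>i\<in>{1..r}. m i) + (\<Sum>i\<in>{1..r-1}. l i) | m l.
      (\<forall>i\<in>{1..r}. m i \<in> Mblk p ns Z i) \<and> (\<forall>i\<in>{1..r-1}. l i \<in> Lblk p ns Z i)}"
    using sum_block_parts[OF x] by blast
next
  fix x assume "x \<in> {(\<Sum>i\<in>{1..r}. m i) + (\<Sum>i\<in>{1..r-1}. l i) | m l.
      (\<forall>i\<in>{1..r}. m i \<in> Mblk p ns Z i) \<and> (\<forall>i\<in>{1..r-1}. l i \<in> Lblk p ns Z i)}"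
  then obtain m l where x: "x = (\<Sum>i\<in>{1..r}. m i) + (\<Sum>i\<in>{1..r-1}. l i)"
    and m: "\<forall>i\<in>{1..r}. m i \<in> Z" and l: "\<forall>i\<in>{1..r-1}. l i \<in> Z"
    unfolding Mblk_def Lblk_def by blast
  have "(\<Sum>i\<in>{1..r}. m i) \<in> Z" using m by (intro Z_sum_closed) auto
  moreover have "(\<Sum>i\<in>{1..r-1}. l i) \<in> Z" using l by (intro Z_sum_closed) auto
  ultimately show "x \<in> Z" unfolding x by (rule Z_add)
qed (use block_components_unique in blast)+

lemma cc_in_Fset_iff:
  assumes au: "a < p" "u < p"
  shows "c a u \<in> F \<longleftrightarrow> ext_edge E a u \<and> \<pi> a = \<pi> u"
proof
  assume "c a u \<in> F"
  then obtain v w where vw: "v < p" "w < p" "ext_edge E v w" "col {v} = col {w}" "c v w = c a u"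
    unfolding Fset_def by auto
  then have "ext_edge E a u" using cc_eq_0_iff au by metis
  moreover have "\<pi> v = \<pi> w" using pos_eq_pos_iff vw by simp
  ultimately show "ext_edge E a u \<and> \<pi> a = \<pi> u"
    using colour_determines_block_position[OF vw(1-3) au] vw(5) by simp
next
  assume "ext_edge E a u \<and> \<pi> a = \<pi> u"
  moreover have "col {a} \<in> {1..r}" using vertex_colour au by simp
  ultimately have "\<exists>v w. c a u = c v w \<and> v < p \<and> w < p \<and> ext_edge E v w \<and>
      (\<exists>i\<in>{1..r}. col {v} = i \<and> col {w} = i)"
    using au pos_eq_pos_iff by metis
  then show "c a u \<in> F" unfolding Fset_def by simp
qed

lemma colour_sum_colour_invariant:
  assumes \<phi>_0: "\<And>k h. k = 0 \<or> h = 0 \<Longrightarrow> \<phi> k h = 0"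
    and balanced: "\<And>a b. a < p \<Longrightarrow> b < p \<Longrightarrow> colour_sum (\<lambda>k h. \<phi> h k) a b = colour_sum \<phi> a b"
    and h: "a < p" "b < p" "a' < p" "b' < p" "ext_edge E a b" "ext_edge E a' b'" "c a b = c a' b'"
  shows "colour_sum \<phi> a b = colour_sum \<phi> a' b'"
proof -
  have "of_nat (m_both a b k h) * \<phi> k h = of_nat (m_both a' b' k h) * \<phi> k h"
    if "k \<le> r + R" "h \<le> r + R" for k h
  proof (cases "k = 0 \<or> h = 0")
    case False
    then show ?thesis using M1_mboth_eq[OF h] that by simp
  qed (simp add: \<phi>_0)
  then have "colour_sum \<phi> a b + colour_sum (\<lambda>k h. \<phi> h k) a b
      = colour_sum \<phi> a' b' + colour_sum (\<lambda>k h. \<phi> h k) a' b'"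
    unfolding colour_sum_add_swap by (intro sum.cong) auto
  then show ?thesis using balanced h by simp
qed

lemma cpeo_product_vanishes:
  assumes x: "x \<in> Z" and y: "y \<in> Z" and ab: "a \<noteq> b" "{a, b} \<notin> E"
    and u: "u < p" "\<pi> u \<le> \<pi> a" "\<pi> u \<le> \<pi> b"
  shows "x a u * y u b = 0"
proof (rule ccontr)
  assume "x a u * y u b \<noteq> 0"
  then have au: "a < p" "ext_edge E a u" and ub: "b < p" "ext_edge E u b"
    using Z_support[OF x, of a u] Z_support[OF y, of u b] by auto
  then have "u \<noteq> a" "u \<noteq> b" using ab unfolding ext_edge_def by auto
  then have "{u, a} \<in> E" "{u, b} \<in> E" using au ub unfolding ext_edge_def by (auto simp: insert_commute)
  then have "{a, b} \<in> E"
    using cpeo[unfolded cpeo_def, rule_format, OF _ u(1) refl au(1) ub(1)] pos_range[OF u(1)] u ab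
    by blast
  then show False using ab by simp
qed

lemma lower_product_in_Z:
  assumes x: "x \<in> Z" and y: "y \<in> Z"
    and balanced: "\<And>a b. a < p \<Longrightarrow> b < p \<Longrightarrow>
      colour_sum (\<lambda>k h. colour_value x h * colour_value y k) a b
        = colour_sum (\<lambda>k h. colour_value x k * colour_value y h) a b"
  shows "lower_product x y \<in> Z"
proof (rule Z_memI)
  fix a b
  show "lower_product x y a b = lower_product x y b a"
  proof (cases "a < p \<and> b < p")
    case True
    let ?\<phi> = "\<lambda>k h. colour_value x k * colour_value y h"
    have "lower_product x y b a = colour_sum ?\<phi> b a"
      using True by (simp add: lower_product_eq_colour_sum[OF x y])
    also have "\<dots> = colour_sum (\<lambda>k h. ?\<phi> h k) a b" by (rule colour_sum_swap)
    also have "\<dots> = lower_product x y a b"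
      using True balanced by (simp add: lower_product_eq_colour_sum[OF x y])
    finally show ?thesis by simp
  qed (use lower_product_outside[OF x y] in auto)
next
  fix a b :: nat
  assume "p \<le> a \<or> p \<le> b"
  then show "lower_product x y a b = 0" by (rule lower_product_outside[OF x y])
next
  fix a b
  assume "a < p" "b < p" "a \<noteq> b" "{a, b} \<notin> E"
  then show "lower_product x y a b = 0"
    unfolding lower_product_def using cpeo_product_vanishes[OF x y] by (intro sum.neutral) auto
next
  fix a b a' b'
  assume h: "a < p" "b < p" "a' < p" "b' < p" "ext_edge E a b" "ext_edge E a' b'" "c a b = c a' b'"
  have "colour_value x k * colour_value y h = 0" if "k = 0 \<or> h = 0" for k h
    using that by auto
  then show "lower_product x y a b = lower_product x y a' b'"
    using colour_sum_colour_invariant[OF _ balanced h] h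
    by (simp add: lower_product_eq_colour_sum[OF x y])
qed

lemma BlockTri_product_in_Z: "x \<in> Z \<Longrightarrow> mmul p (BlockTri ns x) (mtrans (BlockTri ns x)) \<in> Z"
  unfolding BlockTri_product_eq by (rule lower_product_in_Z) (simp_all add: mult.commute)

lemma mto_Fset_commute:
  assumes M2: "cond_M2 p E r col \<eta>" and ab: "a < p" "b < p" and kh: "k \<in> F" "h \<in> F"
  shows "m_to a b h k = m_to a b k h"
proof (cases "\<pi> a = \<pi> b")
  case True
  then have "col {a} = col {b}" using pos_eq_pos_iff ab by blast
  then have "m_to a b k h = m_to b a k h" using M2 ab kh unfolding cond_M2_def by blast
  then show ?thesis by (simp add: mto_swap)
next
  case False
  have "m_to a b k' h' = 0" if "k' \<in> F" "h' \<in> F" for k' h'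
    using False ab that cc_in_Fset_iff unfolding mto_def by (auto simp: card_eq_0_iff)
  then show ?thesis using kh by simp
qed

lemma colour_value_BlockDiag_in_Fset:
  assumes x: "x \<in> Z" and "colour_value (BlockDiag ns x) k \<noteq> 0"
  shows "k \<in> F"
proof -
  obtain a b where ab: "a < p" "b < p" "c a b = k" "BlockDiag ns x a b \<noteq> 0"
    using assms(2) by (rule colour_value_neq_0E)
  then have "x a b \<noteq> 0" "\<pi> a = \<pi> b" unfolding BlockDiag_def by (auto simp: blk_eq_pos split: if_splits)
  then show ?thesis using Z_support[OF x] ab cc_in_Fset_iff by blast
qed

lemma BlockDiag_product_in_Z:
  assumes M2: "cond_M2 p E r col \<eta>" and x: "x \<in> Z" and y: "y \<in> Z"
  shows "mmul p (BlockDiag ns x) (BlockDiag ns y) \<in> Z"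
proof -
  have BD: "BlockDiag ns z \<in> Z" if "z \<in> Z" for z
    using block_part_in_Z[OF that, of "\<lambda>same _. same"] by (simp add: BlockDiag_def block_part_def)
  show ?thesis
    unfolding BlockDiag_product_eq[OF x y]
  proof (rule lower_product_in_Z[OF BD[OF x] BD[OF y]])
    fix a b assume "a < p" "b < p"
    then show "colour_sum (\<lambda>k h. colour_value (BlockDiag ns x) h * colour_value (BlockDiag ns y) k) a b
        = colour_sum (\<lambda>k h. colour_value (BlockDiag ns x) k * colour_value (BlockDiag ns y) h) a b"
      using mto_Fset_commute[OF M2] colour_value_BlockDiag_in_Fset x y
      by (intro colour_sum_swap_eq) (metis mult_eq_0_iff)
  qed
qed

theorem Z_BC_space: "BC_space p r ns Z"
  unfolding BC_space_def
  using Z_linear_subspace idm_in_Z Z_block_direct_sum BlockTri_product_in_Z by blast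

theorem Z_cBC_space: "cond_M2 p E r col \<eta> \<Longrightarrow> cBC_space p r ns Z"
  unfolding cBC_space_def using Z_BC_space BlockDiag_product_in_Z by blast

end

theorem theorem4p2:
  fixes p r R :: nat and E :: "nat set set" and col :: "nat set \<Rightarrow> nat"
    and \<eta> :: "nat \<Rightarrow> nat" and ns :: "nat \<Rightarrow> nat"
  assumes graph: "simple_graph p E"
    and coloring: "is_coloring p E r R col"
    and eta: "bij_betw \<eta> {1..r} {1..r}"
    and cpeo: "cpeo p E r col \<eta>"
    and ns_def: "\<forall>i\<in>{1..r}. ns i = card {v. v < p \<and> col {v} = \<eta> i}"
    and numbering: "\<forall>i\<in>{1..r}. {v. v < p \<and> col {v} = \<eta> i} = {cumN ns (i - 1) ..< cumN ns i}"
  shows "(CER p E r R col \<eta> \<longrightarrow> BC_space p r ns (Z_G_C p E col))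
       \<and> (symCER p E r R col \<eta> \<longrightarrow> cBC_space p r ns (Z_G_C p E col))"
proof -
  have CER: "CER_colouring p r R E col \<eta> ns" if "CER p E r R col \<eta>"
    using that graph coloring eta cpeo numbering
    unfolding CER_colouring_def CER_colouring_axioms_def ordered_colouring_def CER_def by blast
  show ?thesis
    using CER_colouring.Z_BC_space[OF CER] CER_colouring.Z_cBC_space[OF CER]
    unfolding symCER_def by blast
qed

end
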